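(* Suppose that \[ \mathcal M = \left\{ M \geq 0 : \begin{pmatrix} A - M & B^* \\ B & M \end{pmatrix} \geq 0\right\} \] is non-empty with maximal element $M_+$, minimal element $M_-$, and $M_* = \tfrac{1}{2}(M_+ + M_-)$. Let $A-M_\pm = E_\pm^*E_\pm$ and $A-M_* = E_*^*E_*$, $M_\pm = F_\pm^*F_\pm$ and $M_* = F_*^*F_*$, and $B = F_\pm^*G_\pm E_\pm = F_*^*G_* E_*$, where $G_\pm : \overline{\mathrm{ran}}\, E_\pm \to \overline{\mathrm{ran}}\, F_\pm$ and $G_*: \overline{\mathrm{ran}}\, E_* \to \overline{\mathrm{ran}}\, F_*$ are contractions. The set $\mathcal M$ is a singleton if and only if the operators $G_+$, $G_-$ and $G_*$ are unitary.
   Context: $A$ and $B$ are bounded linear operators on a Hilbert space, with $A$ selfadjoint; $\begin{pmatrix} A - M & B^* \\ B & M \end{pmatrix}$ is viewed as an operator on the direct sum of two copies of that space, and $\mathcal M$ is the set of positive operators $M$ making it positive. When non-empty, $\mathcal M$ is norm closed and convex and has a maximal element $M_+$ and a minimal element $M_-$. Here $\overline{\mathrm{ran}}\, X$ denotes the closure of the range of the operator $X$. *)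

theory Defs
  imports "HOL-Analysis.Analysis" "HOL-Library.Complex_Order"
begin

class cvec = real_vector +
  fixes scaleC :: "complex \<Rightarrow> 'a \<Rightarrow> 'a"
  assumes scaleC_add_right: "scaleC a (x + y) = scaleC a x + scaleC a y"
    and scaleC_add_left: "scaleC (a + b) x = scaleC a x + scaleC b x"
    and scaleC_scaleC: "scaleC a (scaleC b x) = scaleC (a * b) x"
    and scaleC_one: "scaleC 1 x = x"
    and scaleR_scaleC: "scaleR r x = scaleC (complex_of_real r) x"

class cinner_space = cvec + real_normed_vector +
  fixes cinner :: "'a \<Rightarrow> 'a \<Rightarrow> complex"
  assumes cinner_commute: "cinner x y = cnj (cinner y x)"
    and cinner_add_left: "cinner (x + y) z = cinner x z + cinner y z"
    and cinner_scaleC_left: "cinner (scaleC r x) y = cnj r * cinner x y"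
    and cinner_ge_zero: "0 \<le> cinner x x"
    and cinner_eq_zero_iff: "cinner x x = 0 \<longleftrightarrow> x = 0"
    and norm_eq_sqrt_cinner: "norm x = sqrt (cmod (cinner x x))"

class chilbert_space = cinner_space + complete_space

definition bounded_clinear :: "('a::cinner_space \<Rightarrow> 'b::cinner_space) \<Rightarrow> bool" where
  "bounded_clinear T \<longleftrightarrow>
     (\<forall>x y. T (x + y) = T x + T y) \<and> (\<forall>c x. T (scaleC c x) = scaleC c (T x)) \<and>
     (\<exists>K. \<forall>x. norm (T x) \<le> norm x * K)"

definition adj :: "('a::chilbert_space \<Rightarrow> 'b::chilbert_space) \<Rightarrow> ('b \<Rightarrow> 'a)" where
  "adj T = (SOME S. bounded_clinear S \<and> (\<forall>x y. cinner (T x) y = cinner x (S y)))"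

definition selfadjoint :: "('a::chilbert_space \<Rightarrow> 'a) \<Rightarrow> bool" where
  "selfadjoint T \<longleftrightarrow> (\<forall>x y. cinner (T x) y = cinner x (T y))"

text \<open>Positive operator: \<open>\<langle>Tx,x\<rangle> \<ge> 0\<close> (in the complex order, i.e. real and nonnegative).\<close>
definition op_pos :: "('a::chilbert_space \<Rightarrow> 'a) \<Rightarrow> bool" where
  "op_pos T \<longleftrightarrow> (\<forall>x. 0 \<le> cinner (T x) x)"

definition op_le :: "('a::chilbert_space \<Rightarrow> 'a) \<Rightarrow> ('a \<Rightarrow> 'a) \<Rightarrow> bool" where
  "op_le S T \<longleftrightarrow> op_pos (T - S)"

text \<open>Positivity of the block operator \<open>[[P, Q], [R, S]]\<close> on \<open>H \<oplus> H\<close>: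
  \<open>\<langle>(Px + Qy, Rx + Sy), (x, y)\<rangle> \<ge> 0\<close> for all \<open>x, y\<close>.\<close>
definition block_pos ::
  "('a::chilbert_space \<Rightarrow> 'a) \<Rightarrow> ('a \<Rightarrow> 'a) \<Rightarrow> ('a \<Rightarrow> 'a) \<Rightarrow> ('a \<Rightarrow> 'a) \<Rightarrow> bool" where
  "block_pos P Q R S \<longleftrightarrow> (\<forall>x y. 0 \<le> cinner (P x + Q y) x + cinner (R x + S y) y)"

definition Mset :: "('a::chilbert_space \<Rightarrow> 'a) \<Rightarrow> ('a \<Rightarrow> 'a) \<Rightarrow> ('a \<Rightarrow> 'a) set" where
  "Mset A B = {M. bounded_clinear M \<and> op_pos M \<and> block_pos (A - M) (adj B) B M}"

definition contraction_between :: "('a::chilbert_space \<Rightarrow> 'b::chilbert_space) \<Rightarrow> 'a set \<Rightarrow> 'b set \<Rightarrow> bool" where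
  "contraction_between G U V \<longleftrightarrow>
     (\<forall>u\<in>U. \<forall>v\<in>U. G (u + v) = G u + G v) \<and>
     (\<forall>c. \<forall>u\<in>U. G (scaleC c u) = scaleC c (G u)) \<and>
     G ` U \<subseteq> V \<and> (\<forall>u\<in>U. norm (G u) \<le> norm u)"

definition unitary_between :: "('a::chilbert_space \<Rightarrow> 'b::chilbert_space) \<Rightarrow> 'a set \<Rightarrow> 'b set \<Rightarrow> bool" where
  "unitary_between G U V \<longleftrightarrow>
     (\<forall>u\<in>U. \<forall>v\<in>U. G (u + v) = G u + G v) \<and>
     (\<forall>c. \<forall>u\<in>U. G (scaleC c u) = scaleC c (G u)) \<and>
     G ` U = V \<and> (\<forall>u\<in>U. \<forall>v\<in>U. cinner (G u) (G v) = cinner u v)"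

end

theory Submission
  imports Defs
begin

text \<open>
  Fix one of the factorizations \<open>A - M = E\<^sup>*E\<close>, \<open>M = F\<^sup>*F\<close>, \<open>B = F\<^sup>*GE\<close>. The block form of an
  operator \<open>N\<close> at \<open>(x, y)\<close> is \<open>\<langle>(A - N)x, x\<rangle> + 2 Re \<langle>GEx, Fy\<rangle> + \<langle>Ny, y\<rangle>\<close>, so
  \<open>A - (GE)\<^sup>*GE\<close> lies in \<open>Mset A B\<close> (its form dominates \<open>\<parallel>GEx + Fy\<parallel>\<^sup>2\<close>), and so does \<open>(PF)\<^sup>*PF\<close> for
  the projection \<open>P\<close> onto any closed subspace containing the range of \<open>GE\<close>. If \<open>Mset A B = {M}\<close>,
  both operators equal \<open>M\<close>: the first identity makes \<open>G\<close> isometric on the range of \<open>E\<close>, hence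
  on its closure, so the range of \<open>G\<close> is closed; the second, with \<open>P\<close> the projection onto it,
  puts the range of \<open>F\<close> inside it, so \<open>G\<close> is onto and unitary.

  Conversely, let \<open>G\<^sub>*\<close> be unitary and \<open>d v = \<langle>(M\<^sub>+ - M\<^sub>*)v, v\<rangle>\<close>. As \<open>M\<^sub>*\<close> is the midpoint of
  \<open>M\<^sub>+\<close> and \<open>M\<^sub>-\<close>, their block conditions read \<open>\<bar>d x - d y\<bar> \<le> \<parallel>G\<^sub>*E\<^sub>*x + F\<^sub>*y\<parallel>\<^sup>2\<close>. Since
  \<open>G\<^sub>*\<close> is onto, \<open>G\<^sub>*E\<^sub>*x\<close> can approximate \<open>-F\<^sub>*y\<close>; as \<open>d\<close> is quadratic, this forces \<open>d = 0\<close>.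
  So \<open>M\<^sub>+ = M\<^sub>-\<close>, and every element of \<open>Mset A B\<close> lies between them.
\<close>

lemma scaleC_minus1_left: "scaleC (-1) x = - (x::'a::cvec)"
  by (metis of_real_1 of_real_minus scaleR_minus1_left scaleR_scaleC)

lemma scaleC_diff_right: "scaleC c (x - y) = scaleC c x - scaleC c (y::'a::cvec)"
  by (metis scaleC_add_right diff_add_cancel eq_diff_eq)

lemma cinner_add_right: "cinner x (y + z) = cinner x y + cinner x z"
  by (metis cinner_commute cinner_add_left complex_cnj_add)

lemma cinner_scaleC_right: "cinner x (scaleC r y) = r * cinner x y"
  by (metis cinner_commute cinner_scaleC_left complex_cnj_cnj complex_cnj_mult)

lemma cinner_minus_left: "cinner (- x) y = - cinner x y"
  using cinner_scaleC_left[of "-1" x y] by (simp add: scaleC_minus1_left)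

lemma cinner_minus_right: "cinner x (- y) = - cinner x y"
  using cinner_scaleC_right[of x "-1" y] by (simp add: scaleC_minus1_left)

lemma cinner_zero_left [simp]: "cinner 0 y = 0"
  using cinner_minus_left[of 0 y] by simp

lemma cinner_zero_right [simp]: "cinner x 0 = 0"
  using cinner_minus_right[of x 0] by simp

lemma cinner_diff_left: "cinner (x - y) z = cinner x z - cinner y z"
  by (simp only: diff_conv_add_uminus cinner_add_left cinner_minus_left)

lemma cinner_diff_right: "cinner x (y - z) = cinner x y - cinner x z"
  by (simp only: diff_conv_add_uminus cinner_add_right cinner_minus_right)

lemma cinner_scaleR_left: "cinner (scaleR r x) y = of_real r * cinner x y"
  by (simp add: scaleR_scaleC cinner_scaleC_left)

lemma cinner_scaleR_right: "cinner x (scaleR r y) = of_real r * cinner x y"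
  by (simp add: scaleR_scaleC cinner_scaleC_right)

lemma cinner_self: "cinner x x = of_real ((norm x)\<^sup>2)"
proof -
  have "cinner x x = of_real (cmod (cinner x x))"
    using cinner_ge_zero[of x] by (simp add: less_eq_complex_def complex_eq_iff cmod_eq_Re)
  then show ?thesis by (simp add: norm_eq_sqrt_cinner)
qed

lemma Re_cinner_self: "Re (cinner x x) = (norm x)\<^sup>2"
  by (simp add: cinner_self del: of_real_power)

lemma cinner_self_le_iff: "cinner x x \<le> cinner y y \<longleftrightarrow> norm x \<le> norm y"
  by (simp add: cinner_self less_eq_complex_def del: of_real_power)

lemma cinner_self_eq_iff: "cinner x x = cinner y y \<longleftrightarrow> norm x = norm y"
  by (simp add: cinner_self power2_eq_iff_nonneg del: of_real_power)

lemma cinner_ext: "(\<And>z. cinner z x = cinner z y) \<Longrightarrow> x = y"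
  by (metis cinner_diff_right cinner_eq_zero_iff eq_iff_diff_eq_0)

lemma power2_norm_add_cinner:
  "(norm (x + y))\<^sup>2 = (norm x)\<^sup>2 + (norm y)\<^sup>2 + 2 * Re (cinner x y)"
proof -
  have "cinner (x + y) (x + y) = cinner x x + cinner y y + (cinner x y + cnj (cinner x y))"
    by (simp add: cinner_add_left cinner_add_right cinner_commute[of y x])
  then show ?thesis
    by (simp add: cinner_self complex_add_cnj complex_eq_iff del: of_real_power)
qed

text \<open>Best approximation of \<open>x\<close> by multiples of \<open>y\<close>: the source of both the Cauchy-Schwarz
  inequality and the orthogonality of nearest points.\<close>
lemma power2_norm_diff_scaleC_cinner:
  assumes "y \<noteq> 0"
  shows "(norm (x - scaleC (cinner y x / of_real ((norm y)\<^sup>2)) y))\<^sup>2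
           = (norm x)\<^sup>2 - (cmod (cinner y x))\<^sup>2 / (norm y)\<^sup>2"
proof -
  define c where "c = cinner y x"
  define n where "n = (norm y)\<^sup>2"
  define t where "t = c / of_real n"
  have "n \<noteq> 0" using assms by (simp add: n_def)
  have cc: "c * cnj c = of_real ((cmod c)\<^sup>2)" by (rule complex_norm_square[symmetric])
  have "cinner (x - scaleC t y) (x - scaleC t y)
        = cinner x x - (t * cnj c + cnj t * c) + cnj t * t * cinner y y"
    by (simp add: cinner_diff_left cinner_diff_right cinner_scaleC_left cinner_scaleC_right
        cinner_commute[of x y] c_def algebra_simps)
  also have "\<dots> = of_real ((norm x)\<^sup>2 - (cmod c)\<^sup>2 / n)"
  proof -
    have "cinner y y = of_real n" by (simp add: cinner_self n_def)
    then show ?thesis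
      using \<open>n \<noteq> 0\<close> cc by (simp add: t_def cinner_self field_simps del: of_real_power)
  qed
  finally have "of_real ((norm (x - scaleC t y))\<^sup>2) = (of_real ((norm x)\<^sup>2 - (cmod c)\<^sup>2 / n) :: complex)"
    by (simp only: cinner_self)
  then show ?thesis unfolding of_real_eq_iff t_def c_def n_def .
qed

lemma cmod_cinner_le: "cmod (cinner x y) \<le> norm x * norm y"
proof (cases "x = 0")
  case False
  have "0 \<le> (norm y)\<^sup>2 - (cmod (cinner x y))\<^sup>2 / (norm x)\<^sup>2"
    using power2_norm_diff_scaleC_cinner[OF False, of y] by (metis zero_le_power2)
  then have "(cmod (cinner x y))\<^sup>2 \<le> (norm x * norm y)\<^sup>2"
    using False by (simp add: field_simps power_mult_distrib)
  then show ?thesis by (simp add: power2_le_iff_abs_le)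
qed simp

lemma norm_scaleC: "norm (scaleC c x) = cmod c * norm (x::'a::cinner_space)"
proof -
  have "of_real ((norm (scaleC c x))\<^sup>2) = cnj c * c * cinner x x"
    by (simp only: cinner_self[symmetric]) (simp add: cinner_scaleC_left cinner_scaleC_right)
  also have "\<dots> = of_real ((cmod c * norm x)\<^sup>2)"
    by (simp add: cinner_self complex_norm_square mult.commute power_mult_distrib del: of_real_power)
  finally show ?thesis by (simp add: power2_eq_iff_nonneg del: of_real_power)
qed

lemma bounded_linear_scaleC: "bounded_linear (scaleC c :: 'a::cinner_space \<Rightarrow> 'a)"
  by (rule bounded_linear_intro[where K = "cmod c"])
    (simp_all add: scaleC_add_right scaleR_scaleC scaleC_scaleC mult.commute norm_scaleC)

lemma bounded_clinear_iff:
  "bounded_clinear T \<longleftrightarrow> bounded_linear T \<and> (\<forall>c x. T (scaleC c x) = scaleC c (T x))"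
proof
  assume T: "bounded_clinear T"
  then obtain K where "\<And>x. norm (T x) \<le> norm x * K" "\<And>x y. T (x + y) = T x + T y"
    unfolding bounded_clinear_def by blast
  with T show "bounded_linear T \<and> (\<forall>c x. T (scaleC c x) = scaleC c (T x))"
    unfolding bounded_clinear_def by (auto intro: bounded_linear_intro simp: scaleR_scaleC)
next
  assume "bounded_linear T \<and> (\<forall>c x. T (scaleC c x) = scaleC c (T x))"
  then show "bounded_clinear T"
    unfolding bounded_clinear_def by (auto simp: linear_add bounded_linear.linear bounded_linear.bounded)
qed

lemma bounded_clinear_add: "bounded_clinear T \<Longrightarrow> T (x + y) = T x + T y"
  unfolding bounded_clinear_def by blast

lemma bounded_clinear_scaleC: "bounded_clinear T \<Longrightarrow> T (scaleC c x) = scaleC c (T x)"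
  unfolding bounded_clinear_def by blast

lemma bounded_clinear_bounded_linear: "bounded_clinear T \<Longrightarrow> bounded_linear T"
  by (simp add: bounded_clinear_iff)

lemma bounded_clinear_scaleR: "bounded_clinear T \<Longrightarrow> T (scaleR r x) = scaleR r (T x)"
  by (simp add: scaleR_scaleC bounded_clinear_scaleC)

lemma bounded_clinear_diff: "bounded_clinear T \<Longrightarrow> T (x - y) = T x - T y"
  by (simp add: bounded_clinear_bounded_linear linear_diff bounded_linear.linear)

lemma bounded_clinear_compose:
  "bounded_clinear S \<Longrightarrow> bounded_clinear T \<Longrightarrow> bounded_clinear (\<lambda>x. S (T x))"
  by (simp add: bounded_clinear_iff bounded_linear_compose)

lemma bounded_clinear_diff_fun:
  "bounded_clinear S \<Longrightarrow> bounded_clinear T \<Longrightarrow> bounded_clinear (\<lambda>x. S x - T x)"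
  by (simp add: bounded_clinear_iff bounded_linear_sub scaleC_diff_right)

lemma bounded_clinear_add_fun:
  "bounded_clinear S \<Longrightarrow> bounded_clinear T \<Longrightarrow> bounded_clinear (\<lambda>x. S x + T x)"
  by (simp add: bounded_clinear_iff bounded_linear_add scaleC_add_right)

section \<open>Closed subspaces and the Riesz representation\<close>

definition csubspace :: "'a::cvec set \<Rightarrow> bool" where
  "csubspace K \<longleftrightarrow> 0 \<in> K \<and> (\<forall>x\<in>K. \<forall>y\<in>K. x + y \<in> K) \<and> (\<forall>c. \<forall>x\<in>K. scaleC c x \<in> K)"

lemma csubspace_0: "csubspace K \<Longrightarrow> 0 \<in> K"
  unfolding csubspace_def by blast

lemma csubspace_add: "csubspace K \<Longrightarrow> x \<in> K \<Longrightarrow> y \<in> K \<Longrightarrow> x + y \<in> K"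
  unfolding csubspace_def by blast

lemma csubspace_scaleC: "csubspace K \<Longrightarrow> x \<in> K \<Longrightarrow> scaleC c x \<in> K"
  unfolding csubspace_def by blast

lemma csubspace_scaleR: "csubspace K \<Longrightarrow> x \<in> K \<Longrightarrow> scaleR r x \<in> K"
  by (simp add: scaleR_scaleC csubspace_scaleC)

lemma csubspace_diff: "csubspace K \<Longrightarrow> x \<in> K \<Longrightarrow> y \<in> K \<Longrightarrow> x - y \<in> K"
  by (metis csubspace_add csubspace_scaleC diff_conv_add_uminus scaleC_minus1_left)

lemma csubspace_range: "bounded_clinear T \<Longrightarrow> csubspace (range T)"
  unfolding csubspace_def
  by (auto simp: bounded_clinear_add[symmetric] bounded_clinear_scaleC[symmetric])
    (metis bounded_clinear_diff diff_self rangeI)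

lemma csubspace_closure:
  fixes S :: "'a::cinner_space set"
  assumes S: "csubspace S"
  shows "csubspace (closure S)"
  unfolding csubspace_def
proof (intro conjI ballI allI)
  show "0 \<in> closure S" using csubspace_0[OF S] closure_subset by blast
  have translate: "(\<lambda>x. x + y) ` closure S \<subseteq> closure S" if "y \<in> closure S" for y
  proof (rule image_closure_subset)
    show "(\<lambda>x. x + y) ` S \<subseteq> closure S"
    proof
      fix z assume "z \<in> (\<lambda>x. x + y) ` S"
      then obtain a where a: "a \<in> S" "z = a + y" by blast
      have "(\<lambda>y. a + y) ` closure S \<subseteq> closure S"
        using S a(1) by (intro image_closure_subset) (auto intro!: continuous_intros csubspace_add
            closure_subset[THEN subsetD])
      then show "z \<in> closure S" using that a(2) by blast
    qed
  qed (auto intro: continuous_intros)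
  show "x + y \<in> closure S" if "x \<in> closure S" "y \<in> closure S" for x y
    using translate[OF that(2)] that(1) by blast
  show "scaleC c x \<in> closure S" if "x \<in> closure S" for c x
  proof -
    have "scaleC c ` closure S \<subseteq> closure S"
      using S by (intro image_closure_subset linear_continuous_on bounded_linear_scaleC)
        (auto intro: csubspace_scaleC closure_subset[THEN subsetD])
    then show ?thesis using that by blast
  qed
qed

lemma parallelogram_law:
  "(norm (x + y))\<^sup>2 + (norm (x - y))\<^sup>2 = 2 * (norm x)\<^sup>2 + 2 * (norm (y::'a::cinner_space))\<^sup>2"
  using power2_norm_add_cinner[of x y] power2_norm_add_cinner[of x "- y"]
  by (simp add: cinner_minus_right)

lemma csubspace_near_points_close:
  fixes K :: "'a::cinner_space set"
  assumes K: "csubspace K" "a \<in> K" "b \<in> K" and d: "\<And>k. k \<in> K \<Longrightarrow> d \<le> (norm (z - k))\<^sup>2"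
  shows "(norm (a - b))\<^sup>2 + 4 * d \<le> 2 * (norm (z - a))\<^sup>2 + 2 * (norm (z - b))\<^sup>2"
proof -
  have "(z - a) + (z - b) = 2 *\<^sub>R (z - (1/2) *\<^sub>R (a + b))"
    by (simp add: algebra_simps scaleR_2)
  moreover have "(1/2) *\<^sub>R (a + b) \<in> K" using K by (intro csubspace_scaleR csubspace_add)
  ultimately have "4 * d \<le> (norm ((z - a) + (z - b)))\<^sup>2"
    using d by (simp add: power_mult_distrib)
  moreover have "norm ((z - a) - (z - b)) = norm (a - b)"
    by (simp add: norm_minus_commute)
  ultimately show ?thesis using parallelogram_law[of "z - a" "z - b"] by simp
qed

lemma Cauchy_if_power2_dist_le:
  fixes p :: "nat \<Rightarrow> 'a::metric_space" and \<epsilon> :: "nat \<Rightarrow> real"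
  assumes \<epsilon>: "\<epsilon> \<longlonglongrightarrow> 0" and p: "\<And>m n. (dist (p m) (p n))\<^sup>2 \<le> \<epsilon> m + \<epsilon> n"
  shows "Cauchy p"
  unfolding Cauchy_def
proof (intro allI impI)
  fix e :: real assume "0 < e"
  then obtain N where N: "\<And>n. N \<le> n \<Longrightarrow> \<bar>\<epsilon> n\<bar> < e\<^sup>2 / 2"
    using LIMSEQ_D[OF \<epsilon>, of "e\<^sup>2 / 2"] by auto
  have "dist (p m) (p n) < e" if "N \<le> m" "N \<le> n" for m n
  proof -
    have "(dist (p m) (p n))\<^sup>2 < e\<^sup>2" using p[of m n] N[OF that(1)] N[OF that(2)] by linarith
    then show ?thesis using \<open>0 < e\<close> by (simp add: power_less_imp_less_base)
  qed
  then show "\<exists>M. \<forall>m\<ge>M. \<forall>n\<ge>M. dist (p m) (p n) < e" by blast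
qed

lemma closed_csubspace_nearest_point:
  fixes K :: "'a::chilbert_space set"
  assumes K: "csubspace K" "closed K"
  obtains p where "p \<in> K" "\<And>k. k \<in> K \<Longrightarrow> norm (z - p) \<le> norm (z - k)"
proof -
  define d where "d = (INF k\<in>K. (norm (z - k))\<^sup>2)"
  have bdd: "bdd_below ((\<lambda>k. (norm (z - k))\<^sup>2) ` K)"
    by (rule bdd_belowI2[of _ 0]) simp
  have d_le: "d \<le> (norm (z - k))\<^sup>2" if "k \<in> K" for k
    unfolding d_def using bdd that by (rule cINF_lower)
  have "\<exists>k\<in>K. (norm (z - k))\<^sup>2 < d + inverse (real (Suc n))" for n
  proof -
    have "d < d + inverse (real (Suc n))" by simp
    then show ?thesis using cINF_less_iff[OF _ bdd] csubspace_0[OF K(1)] unfolding d_def by blast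
  qed
  then obtain p where p: "\<And>n. p n \<in> K"
    and p_near: "\<And>n. (norm (z - p n))\<^sup>2 < d + inverse (real (Suc n))"
    by metis
  have p_close: "(norm (p m - p n))\<^sup>2 \<le> 2 * inverse (real (Suc m)) + 2 * inverse (real (Suc n))"
    for m n
  proof -
    have "(norm (p m - p n))\<^sup>2 + 4 * d \<le> 2 * (norm (z - p m))\<^sup>2 + 2 * (norm (z - p n))\<^sup>2"
      by (rule csubspace_near_points_close[OF K(1) p p d_le])
    then show ?thesis using p_near[of m] p_near[of n] by linarith
  qed
  have "Cauchy p"
  proof (rule Cauchy_if_power2_dist_le[where \<epsilon> = "\<lambda>n. 2 * inverse (real (Suc n))"])
    show "(\<lambda>n. 2 * inverse (real (Suc n))) \<longlonglongrightarrow> 0"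
      by (intro tendsto_mult_right_zero LIMSEQ_inverse_real_of_nat)
    show "(dist (p m) (p n))\<^sup>2 \<le> 2 * inverse (real (Suc m)) + 2 * inverse (real (Suc n))" for m n
      using p_close by (simp add: dist_norm)
  qed
  then obtain q where q: "p \<longlonglongrightarrow> q" using Cauchy_convergent convergent_def by blast
  have "q \<in> K" using closed_sequentially[OF K(2) _ q] p by blast
  have "(\<lambda>n. (norm (z - p n))\<^sup>2) \<longlonglongrightarrow> (norm (z - q))\<^sup>2"
    by (intro tendsto_intros q)
  moreover have "(\<lambda>n. d + inverse (real (Suc n))) \<longlonglongrightarrow> d + 0"
    by (intro tendsto_intros LIMSEQ_inverse_real_of_nat)
  ultimately have q_near: "(norm (z - q))\<^sup>2 \<le> d + 0"
    using p_near by (intro LIMSEQ_le) (auto intro: less_imp_le)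
  have "norm (z - q) \<le> norm (z - k)" if "k \<in> K" for k
  proof (rule power2_le_imp_le)
    show "(norm (z - q))\<^sup>2 \<le> (norm (z - k))\<^sup>2" using q_near d_le[OF that] by linarith
  qed simp
  with \<open>q \<in> K\<close> show ?thesis by (rule that)
qed

lemma nearest_point_orthogonal:
  assumes K: "csubspace K" and p: "p \<in> K" "\<And>k. k \<in> K \<Longrightarrow> norm (z - p) \<le> norm (z - k)"
    and k: "k \<in> K"
  shows "cinner k (z - p) = 0"
proof (cases "k = 0")
  case False
  define t where "t = cinner k (z - p) / of_real ((norm k)\<^sup>2)"
  have "p + scaleC t k \<in> K" using K p(1) k by (intro csubspace_add csubspace_scaleC)
  then have "(norm (z - p))\<^sup>2 \<le> (norm ((z - p) - scaleC t k))\<^sup>2"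
    using p(2) by (simp add: diff_diff_eq power_mono)
  then have "(cmod (cinner k (z - p)))\<^sup>2 / (norm k)\<^sup>2 \<le> 0"
    unfolding t_def power2_norm_diff_scaleC_cinner[OF False] by simp
  then show ?thesis using False by (simp add: divide_le_0_iff)
qed simp

lemma closed_csubspace_orthogonal_decomposition:
  fixes K :: "'a::chilbert_space set"
  assumes "csubspace K" "closed K"
  shows "\<exists>p\<in>K. \<forall>k\<in>K. cinner k (z - p) = 0"
  using closed_csubspace_nearest_point[OF assms] nearest_point_orthogonal[OF assms(1)] by metis

lemma riesz_representation:
  fixes \<phi> :: "'a::chilbert_space \<Rightarrow> complex"
  assumes add: "\<And>x y. \<phi> (x + y) = \<phi> x + \<phi> y" and scale: "\<And>c x. \<phi> (scaleC c x) = c * \<phi> x"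
    and bound: "\<And>x. cmod (\<phi> x) \<le> norm x * K"
  obtains w where "\<And>x. \<phi> x = cinner w x"
proof (cases "\<forall>x. \<phi> x = 0")
  case True
  then show ?thesis using that[of 0] by simp
next
  case False
  then obtain z where "\<phi> z \<noteq> 0" by blast
  have lin: "bounded_linear \<phi>"
    by (rule bounded_linear_intro[where K = K]) (simp_all add: add bound scaleR_scaleC scale scaleR_conv_of_real)
  define N where "N = {x. \<phi> x = 0}"
  have "csubspace N"
    unfolding csubspace_def N_def using lin by (simp add: add scale bounded_linear.linear linear_0)
  moreover have "closed N"
    unfolding N_def by (intro closed_Collect_eq linear_continuous_on lin continuous_on_const)
  ultimately obtain p where "p \<in> N" and orth: "\<And>k. k \<in> N \<Longrightarrow> cinner k (z - p) = 0"
    using closed_csubspace_orthogonal_decomposition by blast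
  define e where "e = z - p"
  have "\<phi> e = \<phi> z"
    using \<open>p \<in> N\<close> lin by (simp add: e_def N_def bounded_linear.linear linear_diff)
  with \<open>\<phi> z \<noteq> 0\<close> have "\<phi> e \<noteq> 0" "e \<noteq> 0"
    using lin by (auto simp: bounded_linear.linear linear_0)
  show ?thesis
  proof (rule that)
    fix x
    define v where "v = scaleC (\<phi> x) e - scaleC (\<phi> e) x"
    have "\<phi> v = 0" using lin by (simp add: v_def scale bounded_linear.linear linear_diff)
    then have "cinner e v = 0"
      using orth[of v] by (metis N_def e_def cinner_commute complex_cnj_zero mem_Collect_eq)
    then have "\<phi> x * of_real ((norm e)\<^sup>2) = \<phi> e * cinner e x"
      by (simp add: v_def cinner_diff_right cinner_scaleC_right cinner_self)
    then show "\<phi> x = cinner (scaleC (cnj (\<phi> e) / of_real ((norm e)\<^sup>2)) e) x"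
      using \<open>e \<noteq> 0\<close> by (simp add: cinner_scaleC_left field_simps)
  qed
qed

section \<open>Adjoints and quadratic forms\<close>

lemma adj_exists:
  fixes T :: "'a::chilbert_space \<Rightarrow> 'b::chilbert_space"
  assumes T: "bounded_clinear T"
  shows "\<exists>S. bounded_clinear S \<and> (\<forall>x y. cinner (T x) y = cinner x (S y))"
proof -
  obtain K where "K \<ge> 0" and K: "\<And>x. norm (T x) \<le> norm x * K"
    using bounded_linear.nonneg_bounded[OF bounded_clinear_bounded_linear[OF T]] by blast
  have "\<exists>w. \<forall>x. cinner (T x) y = cinner x w" for y
  proof -
    have "cmod (cinner y (T x)) \<le> norm x * (norm y * K)" for x
      using cmod_cinner_le[of y "T x"] mult_left_mono[OF K[of x], of "norm y"]
      by (simp add: algebra_simps)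
    then obtain w where "\<And>x. cinner y (T x) = cinner w x"
      using riesz_representation[of "\<lambda>x. cinner y (T x)" "norm y * K"]
      by (simp add: bounded_clinear_add[OF T] bounded_clinear_scaleC[OF T]
          cinner_add_right cinner_scaleC_right) blast
    then show ?thesis by (metis cinner_commute)
  qed
  then obtain S where S: "\<And>x y. cinner (T x) y = cinner x (S y)" by metis
  have "norm (S y) \<le> norm y * K" for y
  proof -
    have "(norm (S y))\<^sup>2 = Re (cinner (T (S y)) y)" by (simp add: S Re_cinner_self)
    also have "\<dots> \<le> norm (S y) * K * norm y"
      using cmod_cinner_le[of "T (S y)" y] complex_Re_le_cmod[of "cinner (T (S y)) y"]
        mult_right_mono[OF K[of "S y"] norm_ge_zero[of y]] by linarith
    finally show ?thesis
      using \<open>K \<ge> 0\<close> by (cases "S y = 0") (simp_all add: power2_eq_square algebra_simps)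
  qed
  moreover have "S (y + y') = S y + S y'" "S (scaleC c y) = scaleC c (S y)" for c y y'
    by (rule cinner_ext, simp add: S[symmetric] cinner_add_right cinner_scaleC_right)+
  ultimately have "bounded_clinear S" unfolding bounded_clinear_def by blast
  with S show ?thesis by blast
qed

lemma
  fixes T :: "'a::chilbert_space \<Rightarrow> 'b::chilbert_space"
  assumes "bounded_clinear T"
  shows bounded_clinear_adj: "bounded_clinear (adj T)"
    and cinner_adj_right: "cinner (T x) y = cinner x (adj T y)"
  using someI_ex[OF adj_exists[OF assms]] unfolding adj_def by blast+

lemma cinner_adj_left: "bounded_clinear T \<Longrightarrow> cinner (adj T y) x = cinner y (T x)"
  by (metis cinner_adj_right cinner_commute)

lemma eq_0_if_cinner_apply_self_eq_0:
  assumes T: "bounded_clinear T" and form: "\<And>x. cinner (T x) x = 0"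
  shows "T x = 0"
proof -
  have sym: "cinner (T x) y + cinner (T y) x = 0" for y
    using form[of "x + y"] form[of x] form[of y]
    by (simp add: bounded_clinear_add[OF T] cinner_add_left cinner_add_right add.commute)
  have "\<i> * (cinner (T x) y - cinner (T y) x) = 0" for y
    using sym[of "scaleC \<i> y"]
    by (simp add: bounded_clinear_scaleC[OF T] cinner_scaleC_left cinner_scaleC_right algebra_simps)
  then have "cinner (T x) y = 0" for y using sym[of y] by simp
  then show ?thesis using cinner_eq_zero_iff by blast
qed

lemma op_le_antisym:
  assumes "bounded_clinear S" "bounded_clinear T" "op_le S T" "op_le T S"
  shows "S = T"
proof
  fix x
  have "cinner (T y - S y) y = 0" for y
  proof -
    have "0 \<le> cinner (T y - S y) y" "0 \<le> - cinner (T y - S y) y"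
      using assms(3,4) by (simp_all add: op_le_def op_pos_def cinner_diff_left)
    then show ?thesis by (metis antisym neg_0_le_iff_le)
  qed
  then have "T x - S x = 0"
    using eq_0_if_cinner_apply_self_eq_0[OF bounded_clinear_diff_fun[OF assms(2,1)]] by blast
  then show "S x = T x" by simp
qed

section \<open>Orthogonal projection onto a closed subspace\<close>

definition cproj :: "'a::chilbert_space set \<Rightarrow> 'a \<Rightarrow> 'a" where
  "cproj W z = (SOME p. p \<in> W \<and> (\<forall>k\<in>W. cinner k (z - p) = 0))"

context
  fixes W :: "'a::chilbert_space set"
  assumes W: "csubspace W" "closed W"
begin

lemma cproj_mem: "cproj W z \<in> W"
  and cinner_diff_cproj: "k \<in> W \<Longrightarrow> cinner k (z - cproj W z) = 0"
  using someI_ex[OF closed_csubspace_orthogonal_decomposition[OF W, of z, unfolded Bex_def]]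
  unfolding cproj_def by blast+

lemma cproj_unique:
  assumes "p \<in> W" "\<And>k. k \<in> W \<Longrightarrow> cinner k (z - p) = 0"
  shows "cproj W z = p"
proof -
  define d where "d = p - cproj W z"
  have "d \<in> W" unfolding d_def using W(1) assms(1) cproj_mem by (rule csubspace_diff)
  moreover have "d = (z - cproj W z) - (z - p)" by (simp add: d_def)
  ultimately have "cinner d d = 0"
    using assms(2) cinner_diff_cproj[of d z] by (metis cinner_diff_right diff_self)
  then show ?thesis by (simp add: d_def cinner_eq_zero_iff)
qed

lemma power2_norm_cproj: "(norm z)\<^sup>2 = (norm (cproj W z))\<^sup>2 + (norm (z - cproj W z))\<^sup>2"
  using power2_norm_add_cinner[of "cproj W z" "z - cproj W z"] cinner_diff_cproj[OF cproj_mem]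
  by simp

lemma norm_cproj_le: "norm (cproj W z) \<le> norm z"
proof (rule power2_le_imp_le)
  show "(norm (cproj W z))\<^sup>2 \<le> (norm z)\<^sup>2" using power2_norm_cproj[of z] by simp
qed simp

lemma bounded_clinear_cproj: "bounded_clinear (cproj W)"
  unfolding bounded_clinear_def
proof (intro conjI allI exI)
  show "cproj W (x + y) = cproj W x + cproj W y" for x y
  proof (rule cproj_unique)
    show "cproj W x + cproj W y \<in> W" using W(1) cproj_mem cproj_mem by (rule csubspace_add)
    fix k assume "k \<in> W"
    have "(x + y) - (cproj W x + cproj W y) = (x - cproj W x) + (y - cproj W y)" by simp
    then show "cinner k ((x + y) - (cproj W x + cproj W y)) = 0"
      using cinner_diff_cproj[OF \<open>k \<in> W\<close>] by (simp only: cinner_add_right) simp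
  qed
  show "cproj W (scaleC c x) = scaleC c (cproj W x)" for c x
    using W cproj_mem cinner_diff_cproj
    by (intro cproj_unique) (simp_all add: csubspace_scaleC scaleC_diff_right[symmetric] cinner_scaleC_right)
  show "norm (cproj W x) \<le> norm x * 1" for x
    using norm_cproj_le by simp
qed

lemma mem_if_norm_cproj_eq: "norm (cproj W z) = norm z \<Longrightarrow> z \<in> W"
  using power2_norm_cproj[of z] cproj_mem[of z] by simp

end

lemma contraction_between_add:
  "contraction_between G U V \<Longrightarrow> u \<in> U \<Longrightarrow> v \<in> U \<Longrightarrow> G (u + v) = G u + G v"
  unfolding contraction_between_def by blast

lemma contraction_between_scaleC:
  "contraction_between G U V \<Longrightarrow> u \<in> U \<Longrightarrow> G (scaleC c u) = scaleC c (G u)"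
  unfolding contraction_between_def by blast

lemma contraction_between_mem: "contraction_between G U V \<Longrightarrow> u \<in> U \<Longrightarrow> G u \<in> V"
  unfolding contraction_between_def by blast

lemma contraction_between_norm_le: "contraction_between G U V \<Longrightarrow> u \<in> U \<Longrightarrow> norm (G u) \<le> norm u"
  unfolding contraction_between_def by blast

lemma contraction_between_diff:
  "contraction_between G U V \<Longrightarrow> csubspace U \<Longrightarrow> u \<in> U \<Longrightarrow> v \<in> U \<Longrightarrow> G (u - v) = G u - G v"
  using contraction_between_add[of G U V "u - v" v] csubspace_diff[of U u v] by simp

lemma unitary_between_norm: "unitary_between G U V \<Longrightarrow> u \<in> U \<Longrightarrow> norm (G u) = norm u"
  unfolding unitary_between_def by (simp add: norm_eq_sqrt_cinner)

context
  fixes G :: "'a::chilbert_space \<Rightarrow> 'b::chilbert_space" and U V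
  assumes G: "contraction_between G U V" and U: "csubspace U"
begin

lemma contraction_between_continuous_on: "continuous_on U G"
proof (rule lipschitz_on_continuous_on)
  show "1-lipschitz_on U G"
    by (rule lipschitz_onI)
      (simp_all add: dist_norm contraction_between_diff[OF G U, symmetric]
        contraction_between_norm_le[OF G] csubspace_diff[OF U])
qed

lemma csubspace_image_contraction_between: "csubspace (G ` U)"
  unfolding csubspace_def
proof (intro conjI ballI allI)
  have "G 0 = 0"
    using contraction_between_diff[OF G U csubspace_0[OF U] csubspace_0[OF U]] by simp
  then show "0 \<in> G ` U" using csubspace_0[OF U] by force
  show "x + y \<in> G ` U" if "x \<in> G ` U" "y \<in> G ` U" for x y
  proof -
    from that obtain a b where "a \<in> U" "b \<in> U" "x = G a" "y = G b" by blast
    then have "x + y = G (a + b)" using contraction_between_add[OF G] by simp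
    with \<open>a \<in> U\<close> \<open>b \<in> U\<close> show ?thesis using csubspace_add[OF U] by blast
  qed
  show "scaleC c x \<in> G ` U" if "x \<in> G ` U" for c x
  proof -
    from that obtain a where "a \<in> U" "x = G a" by blast
    then have "scaleC c x = G (scaleC c a)" using contraction_between_scaleC[OF G] by simp
    with \<open>a \<in> U\<close> show ?thesis using csubspace_scaleC[OF U] by blast
  qed
qed

lemma cinner_eq_if_norm_eq:
  assumes iso: "\<And>u. u \<in> U \<Longrightarrow> norm (G u) = norm u" and "u \<in> U" "v \<in> U"
  shows "cinner (G u) (G v) = cinner u v"
proof -
  have Re_eq: "Re (cinner (G a) (G b)) = Re (cinner a b)" if "a \<in> U" "b \<in> U" for a b
    using power2_norm_add_cinner[of "G a" "G b"] power2_norm_add_cinner[of a b]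
      iso[OF csubspace_add[OF U that]] iso[OF that(1)] iso[OF that(2)]
    by (simp add: contraction_between_add[OF G that])
  have "Im (cinner (G u) (G v)) = Im (cinner u v)"
    using Re_eq[OF \<open>u \<in> U\<close> csubspace_scaleC[OF U \<open>v \<in> U\<close>, of \<i>]]
    by (simp add: contraction_between_scaleC[OF G \<open>v \<in> U\<close>] cinner_scaleC_right)
  with Re_eq[OF \<open>u \<in> U\<close> \<open>v \<in> U\<close>] show ?thesis by (simp add: complex_eq_iff)
qed

end

lemma contraction_between_norm_eq_on_closure:
  assumes G: "contraction_between G (closure S) V" and S: "csubspace S"
    and iso: "\<And>s. s \<in> S \<Longrightarrow> norm (G s) = norm s" and u: "u \<in> closure S"
  shows "norm (G u) = norm u"
proof -
  have "continuous_on (closure S) (\<lambda>u. norm (G u) - norm u)"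
    by (intro continuous_intros contraction_between_continuous_on[OF G csubspace_closure[OF S]])
  then have "norm (G u) - norm u = 0"
    by (rule continuous_constant_on_closure) (simp_all add: iso u)
  then show ?thesis by simp
qed

lemma closed_isometric_image:
  fixes f :: "'a::complete_space \<Rightarrow> 'b::metric_space"
  assumes S: "closed S" and f: "\<And>x y. x \<in> S \<Longrightarrow> y \<in> S \<Longrightarrow> dist (f x) (f y) = dist x y"
  shows "closed (f ` S)"
  unfolding closed_sequential_limits
proof (intro allI impI, elim conjE)
  fix g l assume "\<forall>n. g n \<in> f ` S" and g: "g \<longlonglongrightarrow> l"
  then have "\<forall>n. \<exists>y. y \<in> S \<and> g n = f y" by blast
  then obtain x where x: "\<And>n. x n \<in> S" and gx: "\<And>n. g n = f (x n)" by metis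
  have "Cauchy x"
    using LIMSEQ_imp_Cauchy[OF g] unfolding Cauchy_def gx f[OF x x] .
  then obtain x0 where x0: "x \<longlonglongrightarrow> x0" using Cauchy_convergent convergent_def by blast
  have "x0 \<in> S" using closed_sequentially[OF S _ x0] x by blast
  have "(\<lambda>n. f (x n)) \<longlonglongrightarrow> f x0"
    using x0 unfolding tendsto_iff f[OF x \<open>x0 \<in> S\<close>] .
  with g have "l = f x0" unfolding gx[symmetric] by (rule LIMSEQ_unique)
  with \<open>x0 \<in> S\<close> show "l \<in> f ` S" by blast
qed

section \<open>Positivity of the block operator\<close>

lemma block_pos_if_dominated:
  assumes B: "bounded_clinear B"
    and B_form: "\<And>x y. cinner (B x) y = cinner (L x) (K y)"
    and S: "\<And>x. cinner (L x) (L x) \<le> cinner (S x) x"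
    and N: "\<And>y. cinner (K y) (K y) \<le> cinner (N y) y"
  shows "block_pos S (adj B) B N"
  unfolding block_pos_def
proof (intro allI)
  fix x y
  have "cinner (adj B y) x = cinner (K y) (L x)"
    by (metis B_form cinner_adj_left[OF B] cinner_commute)
  then have "cinner (L x + K y) (L x + K y)
      = cinner (L x) (L x) + cinner (B x) y + cinner (adj B y) x + cinner (K y) (K y)"
    by (simp add: cinner_add_left cinner_add_right B_form)
  also have "\<dots> \<le> cinner (S x) x + cinner (B x) y + cinner (adj B y) x + cinner (N y) y"
    using S N by (intro add_mono order_refl)
  finally show "0 \<le> cinner (S x + adj B y) x + cinner (B x + N y) y"
    using cinner_ge_zero[of "L x + K y"] by (simp add: cinner_add_left algebra_simps)
qed

lemma Re_block_pos:
  assumes "bounded_clinear B" "block_pos S (adj B) B N"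
  shows "0 \<le> Re (cinner (S x) x) + 2 * Re (cinner (B x) y) + Re (cinner (N y) y)"
proof -
  have "0 \<le> Re (cinner (S x + adj B y) x + cinner (B x + N y) y)"
    using assms(2) unfolding block_pos_def less_eq_complex_def by simp
  moreover have "Re (cinner (adj B y) x) = Re (cinner (B x) y)"
    by (simp add: cinner_adj_left[OF assms(1)] cinner_commute[of y])
  ultimately show ?thesis by (simp add: cinner_add_left)
qed

lemma nonpos_if_diff_le_power2_norm:
  fixes d :: "'a::real_vector \<Rightarrow> real" and L R :: "'a \<Rightarrow> 'b::real_normed_vector"
  assumes d_scale: "\<And>t v. d (t *\<^sub>R v) = t\<^sup>2 * d v"
    and R_scale: "\<And>t v. R (t *\<^sub>R v) = t *\<^sub>R R v"
    and d_diff: "\<And>x y. \<bar>d x - d y\<bar> \<le> (norm (L x + R y))\<^sup>2"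
    and dense: "range R \<subseteq> closure (range L)"
  shows "d y \<le> 0"
proof -
  define C where "C = 1 + (1 + norm (R y))\<^sup>2"
  have "C > 0" by (simp add: C_def add_pos_nonneg)
  have small: "d y \<le> e * C" if "0 < e" for e
  proof -
    have "R (- y) = - R y" using R_scale[of "-1" y] by simp
    have "R (- y) \<in> closure (range L)" using dense by blast
    from closure_approachableD[OF this \<open>0 < e\<close>]
    obtain x where "dist (R (- y)) (L x) < e" by blast
    then have x: "norm (L x + R y) < e"
      by (simp add: \<open>R (- y) = - R y\<close> dist_norm norm_minus_commute[of "- R y"])
    then have "d x \<le> d y + e\<^sup>2"
      using d_diff[of x y] power_strict_mono[of "norm (L x + R y)" e 2] by simp
    \<comment> \<open>At \<open>(1 + e) y\<close> the value of \<open>d\<close> grows by \<open>(1 + e)\<^sup>2\<close> while \<open>L x\<close> stays \<open>O(e)\<close>-close.\<close>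
    have "L x + R ((1 + e) *\<^sub>R y) = (L x + R y) + e *\<^sub>R R y"
      unfolding R_scale by (simp add: algebra_simps)
    then have "norm (L x + R ((1 + e) *\<^sub>R y)) \<le> e * (1 + norm (R y))"
      using norm_triangle_ineq[of "L x + R y" "e *\<^sub>R R y"] x \<open>0 < e\<close> by (simp add: algebra_simps)
    then have "(norm (L x + R ((1 + e) *\<^sub>R y)))\<^sup>2 \<le> (e * (1 + norm (R y)))\<^sup>2"
      by (rule power_mono) simp
    then have "(1 + e)\<^sup>2 * d y \<le> d x + (e * (1 + norm (R y)))\<^sup>2"
      using d_diff[of x "(1 + e) *\<^sub>R y"] unfolding d_scale abs_le_iff by linarith
    with \<open>d x \<le> d y + e\<^sup>2\<close> have "e * (2 * d y + e * d y) \<le> e * (e * C)"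
      by (simp add: C_def power2_eq_square algebra_simps)
    then have "2 * d y + e * d y \<le> e * C" using \<open>0 < e\<close> by simp
    moreover have "0 < e * C" using \<open>0 < e\<close> \<open>C > 0\<close> by simp
    moreover have "0 \<le> e * d y" if "0 \<le> d y" using \<open>0 < e\<close> that by simp
    ultimately show ?thesis by linarith
  qed
  show ?thesis
  proof (rule field_le_epsilon)
    fix e :: real assume "0 < e"
    then show "d y \<le> 0 + e" using small[of "e / C"] \<open>C > 0\<close> by simp
  qed
qed

text \<open>\<open>E\<close>, \<open>F\<close>, \<open>G\<close> are any of the triples \<open>E\<^sub>\<plusminus>, F\<^sub>\<plusminus>, G\<^sub>\<plusminus>\<close> or \<open>E\<^sub>*, F\<^sub>*, G\<^sub>*\<close> of the statement, with
  \<open>M\<close> the corresponding \<open>M\<^sub>\<plusminus>\<close> or \<open>M\<^sub>*\<close>.\<close>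
locale block_factorization =
  fixes A B M :: "'a::chilbert_space \<Rightarrow> 'a"
    and E :: "'a \<Rightarrow> 'e::chilbert_space" and F :: "'a \<Rightarrow> 'f::chilbert_space" and G :: "'e \<Rightarrow> 'f"
  assumes E: "bounded_clinear E" and F: "bounded_clinear F"
    and A_minus_M: "A - M = adj E \<circ> E" and M_eq: "M = adj F \<circ> F"
    and G: "contraction_between G (closure (range E)) (closure (range F))"
    and B_eq: "B = adj F \<circ> G \<circ> E"
begin

lemma csubspace_closure_range_E: "csubspace (closure (range E))"
  by (rule csubspace_closure[OF csubspace_range[OF E]])

lemma E_mem_closure_range: "E x \<in> closure (range E)"
  by (rule subsetD[OF closure_subset rangeI])

lemma norm_GE_le: "norm (G (E x)) \<le> norm (E x)"
  using contraction_between_norm_le[OF G E_mem_closure_range] .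

lemma bounded_clinear_GE: "bounded_clinear (G \<circ> E)"
proof -
  obtain K where K: "\<And>x. norm (E x) \<le> norm x * K"
    using E unfolding bounded_clinear_def by blast
  have "norm (G (E x)) \<le> norm x * K" for x
    using norm_GE_le[of x] K[of x] by linarith
  then show ?thesis
    unfolding bounded_clinear_def comp_apply
    using contraction_between_add[OF G E_mem_closure_range E_mem_closure_range]
      contraction_between_scaleC[OF G E_mem_closure_range]
    by (simp add: bounded_clinear_add[OF E] bounded_clinear_scaleC[OF E]) blast
qed

lemma A_apply: "A x = adj E (E x) + adj F (F x)"
  using fun_cong[OF A_minus_M, of x] fun_cong[OF M_eq, of x] by (simp add: diff_eq_eq)

lemma bounded_clinear_A: "bounded_clinear A"
  unfolding A_apply[abs_def]
  by (rule bounded_clinear_add_fun[OF bounded_clinear_compose[OF bounded_clinear_adj[OF E] E]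
        bounded_clinear_compose[OF bounded_clinear_adj[OF F] F]])

lemma bounded_clinear_B: "bounded_clinear B"
  unfolding B_eq comp_assoc[symmetric]
  using bounded_clinear_compose[OF bounded_clinear_adj[OF F] bounded_clinear_GE]
  by (simp add: comp_def)

lemma cinner_A: "cinner (A x) y = cinner (E x) (E y) + cinner (F x) (F y)"
  by (simp add: A_apply cinner_add_left cinner_adj_left E F)

lemma cinner_M: "cinner (M x) y = cinner (F x) (F y)"
  by (simp add: M_eq cinner_adj_left F)

lemma cinner_B: "cinner (B x) y = cinner (G (E x)) (F y)"
  by (simp add: B_eq cinner_adj_left F)

lemma Mset_mem_A_minus_adj_GE: "(\<lambda>x. A x - adj (G \<circ> E) (G (E x))) \<in> Mset A B"
  (is "?M1 \<in> _")
proof -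
  have M1_form: "cinner (?M1 x) x = cinner (E x) (E x) + cinner (F x) (F x) - cinner (G (E x)) (G (E x))"
    for x by (simp add: cinner_diff_left cinner_A cinner_adj_left bounded_clinear_GE)
  have F_le: "cinner (F x) (F x) \<le> cinner (?M1 x) x" for x
    using norm_GE_le[of x] unfolding M1_form cinner_self_le_iff[symmetric] by simp
  have "bounded_clinear ?M1"
    using bounded_clinear_diff_fun[OF bounded_clinear_A
        bounded_clinear_compose[OF bounded_clinear_adj[OF bounded_clinear_GE] bounded_clinear_GE]]
    by simp
  moreover have "op_pos ?M1"
    unfolding op_pos_def using order_trans[OF cinner_ge_zero F_le] by blast
  moreover have "block_pos (A - ?M1) (adj B) B ?M1"
    by (rule block_pos_if_dominated[OF bounded_clinear_B, where L = "G \<circ> E" and K = F])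
      (simp_all add: cinner_B F_le cinner_adj_left bounded_clinear_GE)
  ultimately show ?thesis unfolding Mset_def by blast
qed

lemma norm_GE_eq_if_Mset_singleton:
  assumes "Mset A B \<subseteq> {M}"
  shows "norm (G (E x)) = norm (E x)"
proof -
  have "(\<lambda>x. A x - adj (G \<circ> E) (G (E x))) = M"
    using Mset_mem_A_minus_adj_GE assms by blast
  then have "cinner (A x - adj (G \<circ> E) (G (E x))) x = cinner (M x) x" by (rule arg_cong)
  then show ?thesis
    by (simp add: cinner_diff_left cinner_A cinner_M cinner_adj_left bounded_clinear_GE
        cinner_self_eq_iff)
qed

context
  fixes W assumes W: "csubspace W" "closed W" and GE_mem: "\<And>x. G (E x) \<in> W"
begin

lemma Mset_mem_adj_cproj_F: "(\<lambda>x. adj (cproj W \<circ> F) (cproj W (F x))) \<in> Mset A B"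
  (is "?M2 \<in> _")
proof -
  have PF: "bounded_clinear (cproj W \<circ> F)"
    using bounded_clinear_compose[OF bounded_clinear_cproj[OF W] F] by (simp add: comp_def)
  have M2_form: "cinner (?M2 x) y = cinner (cproj W (F x)) (cproj W (F y))" for x y
    using cinner_adj_left[OF PF] by simp
  have B_form: "cinner (B x) y = cinner (G (E x)) (cproj W (F y))" for x y
    using cinner_diff_cproj[OF W GE_mem, of x "F y"] by (simp add: cinner_B cinner_diff_right)
  have "cinner (G (E x)) (G (E x)) \<le> cinner ((A - ?M2) x) x" for x
  proof -
    have "cinner (G (E x)) (G (E x)) + cinner (cproj W (F x)) (cproj W (F x))
        \<le> cinner (E x) (E x) + cinner (F x) (F x)"
      using norm_GE_le norm_cproj_le[OF W(1,2)] by (intro add_mono) (simp_all add: cinner_self_le_iff)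
    then show ?thesis by (simp add: cinner_diff_left cinner_A M2_form algebra_simps)
  qed
  then have "block_pos (A - ?M2) (adj B) B ?M2"
    by (intro block_pos_if_dominated[OF bounded_clinear_B, where L = "G \<circ> E" and K = "cproj W \<circ> F"])
      (simp_all add: B_form M2_form)
  moreover have "bounded_clinear ?M2"
    using bounded_clinear_compose[OF bounded_clinear_adj[OF PF] PF] by simp
  moreover have "op_pos ?M2"
    unfolding op_pos_def M2_form by (simp add: cinner_ge_zero)
  ultimately show ?thesis unfolding Mset_def by blast
qed

lemma F_mem_if_Mset_singleton:
  assumes "Mset A B \<subseteq> {M}"
  shows "F y \<in> W"
proof -
  have "(\<lambda>x. adj (cproj W \<circ> F) (cproj W (F x))) = M"
    using Mset_mem_adj_cproj_F assms by blast
  then have "cinner (adj (cproj W \<circ> F) (cproj W (F y))) y = cinner (M y) y" by (rule arg_cong)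
  then have "norm (cproj W (F y)) = norm (F y)"
    using bounded_clinear_compose[OF bounded_clinear_cproj[OF W] F]
    by (simp add: cinner_adj_left cinner_M cinner_self_eq_iff comp_def)
  then show ?thesis by (rule mem_if_norm_cproj_eq[OF W])
qed

end

theorem unitary_if_Mset_singleton:
  assumes single: "Mset A B \<subseteq> {M}"
  shows "unitary_between G (closure (range E)) (closure (range F))"
proof -
  let ?U = "closure (range E)" and ?V = "closure (range F)"
  have iso: "norm (G u) = norm u" if "u \<in> ?U" for u
    using contraction_between_norm_eq_on_closure[OF G csubspace_range[OF E] _ that]
      norm_GE_eq_if_Mset_singleton[OF single] by blast
  have "closed (G ` ?U)"
  proof (rule closed_isometric_image)
    show "dist (G u) (G v) = dist u v" if "u \<in> ?U" "v \<in> ?U" for u v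
      using iso[OF csubspace_diff[OF csubspace_closure_range_E that]]
      by (simp add: dist_norm contraction_between_diff[OF G csubspace_closure_range_E that, symmetric])
  qed simp
  moreover have "csubspace (G ` ?U)"
    by (rule csubspace_image_contraction_between[OF G csubspace_closure_range_E])
  moreover have "G (E x) \<in> G ` ?U" for x using E_mem_closure_range by blast
  ultimately have "range F \<subseteq> G ` ?U"
    using F_mem_if_Mset_singleton[OF _ _ _ single, of "G ` ?U"] by blast
  then have "?V \<subseteq> G ` ?U"
    using \<open>closed (G ` ?U)\<close> by (rule closure_minimal)
  moreover have "G ` ?U \<subseteq> ?V" using contraction_between_mem[OF G] by blast
  ultimately have "G ` ?U = ?V" by blast
  with G show ?thesis
    unfolding unitary_between_def contraction_between_def
    using cinner_eq_if_norm_eq[OF G csubspace_closure_range_E iso] by blast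
qed

lemma Mset_quadratic_form_diff_le:
  assumes iso: "\<And>x. norm (G (E x)) = norm (E x)" and N: "N \<in> Mset A B"
  shows "Re (cinner (N x) x - cinner (M x) x) - Re (cinner (N y) y - cinner (M y) y)
           \<le> (norm (G (E x) + F y))\<^sup>2"
proof -
  have "block_pos (A - N) (adj B) B N" using N unfolding Mset_def by blast
  from Re_block_pos[OF bounded_clinear_B this, of x y]
  have "0 \<le> Re (cinner (A x - N x) x) + 2 * Re (cinner (B x) y) + Re (cinner (N y) y)" by simp
  then show ?thesis
    using power2_norm_add_cinner[of "G (E x)" "F y"] iso[of x]
    by (simp add: cinner_diff_left cinner_A cinner_B cinner_M Re_cinner_self)
qed

lemma Re_cinner_le_if_unitary:
  assumes M_mid: "\<And>x. M x = (1/2) *\<^sub>R (Mp x + Mm x)"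
    and Mp: "Mp \<in> Mset A B" and Mm: "Mm \<in> Mset A B"
    and unitary: "unitary_between G (closure (range E)) (closure (range F))"
  shows "Re (cinner (Mp x) x) \<le> Re (cinner (Mm x) x)"
proof -
  have Mp_lin: "bounded_clinear Mp" using Mp unfolding Mset_def by blast
  have M_lin: "bounded_clinear M"
    using bounded_clinear_compose[OF bounded_clinear_adj[OF F] F] by (simp add: M_eq comp_def)
  have iso: "norm (G (E x)) = norm (E x)" for x
    by (rule unitary_between_norm[OF unitary E_mem_closure_range])
  define d where "d v = Re (cinner (Mp v) v - cinner (M v) v)" for v
  have Mm_d: "Re (cinner (Mm v) v - cinner (M v) v) = - d v" for v
    by (simp add: d_def M_mid cinner_scaleR_left cinner_add_left field_simps)
  have "d y \<le> 0" for y
  proof (rule nonpos_if_diff_le_power2_norm[where L = "G \<circ> E" and R = F])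
    show "d (t *\<^sub>R v) = t\<^sup>2 * d v" for t v
      by (simp add: d_def bounded_clinear_scaleR[OF Mp_lin] bounded_clinear_scaleR[OF M_lin]
          cinner_scaleR_left cinner_scaleR_right power2_eq_square algebra_simps)
    show "F (t *\<^sub>R v) = t *\<^sub>R F v" for t v by (rule bounded_clinear_scaleR[OF F])
    show "\<bar>d x - d y\<bar> \<le> (norm ((G \<circ> E) x + F y))\<^sup>2" for x y
      using Mset_quadratic_form_diff_le[OF iso Mp, of x y] Mset_quadratic_form_diff_le[OF iso Mm, of x y]
      unfolding Mm_d d_def[symmetric] by (simp add: abs_le_iff)
    have "G ` closure (range E) \<subseteq> closure (range (G \<circ> E))"
    proof (rule image_closure_subset)
      show "continuous_on (closure (range E)) G"
        by (rule contraction_between_continuous_on[OF G csubspace_closure_range_E])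
      show "G ` range E \<subseteq> closure (range (G \<circ> E))"
        unfolding image_comp by (rule closure_subset)
    qed simp
    moreover have "G ` closure (range E) = closure (range F)"
      using unitary unfolding unitary_between_def by blast
    ultimately show "range F \<subseteq> closure (range (G \<circ> E))"
      using closure_subset[of "range F"] by simp
  qed
  then show ?thesis
    using Mm_d[of x] unfolding d_def by (smt (verit) minus_complex.sel(1))
qed

theorem Mset_singleton_if_unitary:
  assumes M_mid: "\<And>x. M x = (1/2) *\<^sub>R (Mp x + Mm x)"
    and Mp: "Mp \<in> Mset A B" "\<forall>N\<in>Mset A B. op_le N Mp"
    and Mm: "Mm \<in> Mset A B" "\<forall>N\<in>Mset A B. op_le Mm N"
    and unitary: "unitary_between G (closure (range E)) (closure (range F))"
  shows "Mset A B = {Mp}"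
proof -
  have Mp_lin: "bounded_clinear Mp" and Mm_lin: "bounded_clinear Mm"
    using Mp(1) Mm(1) unfolding Mset_def by blast+
  have "Re (cinner (Mp x) x) \<le> Re (cinner (Mm x) x)" for x
    using Re_cinner_le_if_unitary[OF M_mid Mp(1) Mm(1) unitary] .
  moreover have "Im (cinner (Mp x) x) = Im (cinner (Mm x) x)" for x
    using Mm(2) Mp(1) unfolding op_le_def op_pos_def by (simp add: less_eq_complex_def cinner_diff_left)
  ultimately have "op_le Mp Mm"
    unfolding op_le_def op_pos_def by (simp add: less_eq_complex_def cinner_diff_left)
  with Mm(2) Mp(1) have "Mp = Mm" by (intro op_le_antisym[OF Mp_lin Mm_lin]) blast+
  have "N = Mp" if "N \<in> Mset A B" for N
  proof (rule op_le_antisym[OF _ Mp_lin])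
    show "bounded_clinear N" using that unfolding Mset_def by blast
    show "op_le N Mp" using Mp(2) that by blast
    show "op_le Mp N" using Mm(2) that \<open>Mp = Mm\<close> by blast
  qed
  with Mp(1) show ?thesis by blast
qed

end

theorem lemma4p2:
  fixes A B Mp Mm :: "'a::chilbert_space \<Rightarrow> 'a"
    and Ep :: "'a \<Rightarrow> 'e1::chilbert_space" and Fp :: "'a \<Rightarrow> 'f1::chilbert_space"
    and Gp :: "'e1 \<Rightarrow> 'f1"
    and Em :: "'a \<Rightarrow> 'e2::chilbert_space" and Fm :: "'a \<Rightarrow> 'f2::chilbert_space"
    and Gm :: "'e2 \<Rightarrow> 'f2"
    and Es :: "'a \<Rightarrow> 'e3::chilbert_space" and Fs :: "'a \<Rightarrow> 'f3::chilbert_space"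
    and Gs :: "'e3 \<Rightarrow> 'f3"
  defines "Ms \<equiv> (\<lambda>x. scaleR (1/2) (Mp x + Mm x))"
  assumes A: "bounded_clinear A" "selfadjoint A"
    and B: "bounded_clinear B"
    and Mp: "Mp \<in> Mset A B" "\<forall>M\<in>Mset A B. op_le M Mp"
    and Mm: "Mm \<in> Mset A B" "\<forall>M\<in>Mset A B. op_le Mm M"
    and E: "bounded_clinear Ep" "bounded_clinear Em" "bounded_clinear Es"
    and F: "bounded_clinear Fp" "bounded_clinear Fm" "bounded_clinear Fs"
    and EE: "A - Mp = adj Ep \<circ> Ep" "A - Mm = adj Em \<circ> Em" "A - Ms = adj Es \<circ> Es"
    and FF: "Mp = adj Fp \<circ> Fp" "Mm = adj Fm \<circ> Fm" "Ms = adj Fs \<circ> Fs"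
    and G: "contraction_between Gp (closure (range Ep)) (closure (range Fp))"
           "contraction_between Gm (closure (range Em)) (closure (range Fm))"
           "contraction_between Gs (closure (range Es)) (closure (range Fs))"
    and BG: "B = adj Fp \<circ> Gp \<circ> Ep" "B = adj Fm \<circ> Gm \<circ> Em" "B = adj Fs \<circ> Gs \<circ> Es"
  shows "(\<exists>M. Mset A B = {M}) \<longleftrightarrow>
           unitary_between Gp (closure (range Ep)) (closure (range Fp)) \<and>
           unitary_between Gm (closure (range Em)) (closure (range Fm)) \<and>
           unitary_between Gs (closure (range Es)) (closure (range Fs))"
proof -
  note factorization_p = block_factorization.intro[OF E(1) F(1) EE(1) FF(1) G(1) BG(1)]
  note factorization_m = block_factorization.intro[OF E(2) F(2) EE(2) FF(2) G(2) BG(2)]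
  note factorization_s = block_factorization.intro[OF E(3) F(3) EE(3) FF(3) G(3) BG(3)]
  have single: "Mset A B \<subseteq> {Mp}" "Mset A B \<subseteq> {Mm}" "Mset A B \<subseteq> {Ms}"
    if "\<exists>M. Mset A B = {M}"
  proof -
    from that obtain M where M: "Mset A B = {M}" ..
    then have "Mp = M" "Mm = M" using Mp(1) Mm(1) by blast+
    moreover from this have "Ms = M" by (simp add: Ms_def fun_eq_iff scaleR_2[symmetric])
    ultimately show "Mset A B \<subseteq> {Mp}" "Mset A B \<subseteq> {Mm}" "Mset A B \<subseteq> {Ms}"
      using M by simp_all
  qed
  have "\<exists>M. Mset A B = {M}" if "unitary_between Gs (closure (range Es)) (closure (range Fs))"
  proof (rule exI)
    show "Mset A B = {Mp}"
      using block_factorization.Mset_singleton_if_unitary[OF factorization_s _ Mp Mm that]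
      by (simp add: Ms_def)
  qed
  then show ?thesis
    using block_factorization.unitary_if_Mset_singleton[OF factorization_p single(1)]
      block_factorization.unitary_if_Mset_singleton[OF factorization_m single(2)]
      block_factorization.unitary_if_Mset_singleton[OF factorization_s single(3)]
    by blast
qed

end
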